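(* Let $C$ be an $A$-code of length $2$ with canonical generator matrix $\begin{pmatrix}g_1&g_2\\0&g_3\end{pmatrix}$, where $g_1,g_3$ are nonzero monic divisors of $f$ in $\mathbb{F}[x]$, $g_3$ divides $(f/g_1)g_2$, and $\deg g_2<\deg g_3$. Then the following are equivalent: (i) $C$ is self-dual, i.e. $C=C^\perp$; (ii) $\deg g_1+\deg g_3=m$, $g_3^2=g_2g_3=g_1^2+g_2^2=0$ in $A$, and $g_1^2\mid f$ in $\mathbb{F}[x]$; (iii) there exist $g',f',r\in\mathbb{F}[x]$ with $g'^2=rf'-1$ such that $f=g_1^2f'$, $g_3=g_1f'$ and $g_2=g_1g'$.
   Context: Let $\mathbb{F}$ be a finite field, $f(x)\in\mathbb{F}[x]$ monic of degree $m$, $A=\mathbb{F}[x]/\langle f(x)\rangle$, elements identified with polynomials of degree $<m$. An $A$-code of length $l$ is an $A$-submodule of $A^l$; $C^\perp=\{a\in A^l:\sum_ia_ic_i=0\ \forall c\in C\}$. The canonical generator matrix (CGM) of a nonzero $A$-code $C$ is the unique matrix over $A$ whose rows generate $C$, are monic with strictly increasing leading indices (position of first nonzero entry), have leading entries dividing $f$, satisfy that $(f/L_i)\cdot(\text{row }i)$ is an $A$-combination of later rows ($L_i$ the leading entry of row $i$), and such that every entry above a leading entry has smaller degree than it. *)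

theory Defs
  imports "HOL-Computational_Algebra.Polynomial"
begin

(* A = F[x]/<f>, elements represented by polynomials p with p mod f = p (degree < deg f).
   A^2 is represented by pairs of such polynomials; multiplication in A is product mod f. *)

definition A_elem :: "'a::field poly \<Rightarrow> 'a poly \<Rightarrow> bool" where
  "A_elem f p \<longleftrightarrow> p mod f = p"

definition code2 :: "'a::field poly \<Rightarrow> 'a poly \<Rightarrow> 'a poly \<Rightarrow> 'a poly \<Rightarrow> ('a poly \<times> 'a poly) set" where
  "code2 f g1 g2 g3 = {((a * g1) mod f, (a * g2 + b * g3) mod f) | a b. A_elem f a \<and> A_elem f b}"

definition dual2 :: "'a::field poly \<Rightarrow> ('a poly \<times> 'a poly) set \<Rightarrow> ('a poly \<times> 'a poly) set" where
  "dual2 f C = {(u, v). A_elem f u \<and> A_elem f v \<and>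
                  (\<forall>(c1, c2) \<in> C. (u * c1 + v * c2) mod f = 0)}"

(* The 2x2 matrix ((g1, g2), (0, g3)) over A is the canonical generator matrix of the code
   it generates: leading entries g1, g3 are monic divisors of f which are nonzero elements of A
   (degree < deg f); all entries are elements of A; (f/g1)*row1 is an A-multiple of row2,
   i.e. g3 divides (f/g1) g2; the entry g2 above the leading entry g3 has smaller degree
   (deg 0 = -infinity). *)
definition is_CGM2 :: "'a::field poly \<Rightarrow> 'a poly \<Rightarrow> 'a poly \<Rightarrow> 'a poly \<Rightarrow> bool" where
  "is_CGM2 f g1 g2 g3 \<longleftrightarrow>
     lead_coeff g1 = 1 \<and> lead_coeff g3 = 1 \<and> g1 dvd f \<and> g3 dvd f \<and>
     degree g1 < degree f \<and> degree g3 < degree f \<and> A_elem f g2 \<and>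
     g3 dvd (f div g1) * g2 \<and> (g2 = 0 \<or> degree g2 < degree g3)"

end

theory Submission
  imports Defs
begin

(* Testing self-orthogonality on the two generating rows gives f | g1^2 + g2^2, f | g2 g3 and
   f | g3^2, and self-duality also puts (f/g1, 0) into C, whence g1 | f/g1, i.e. g1^2 | f.
   Then g1^2 | g2^2 yields g2 = g1 g', and writing f = g1^2 f' the condition f | g1^2 + g2^2
   becomes f' | 1 + g'^2, i.e. g'^2 = r f' - 1. From g3 = (r f' - g'^2) g3 one gets g1 f' | g3,
   and either the degree condition or the membership of (0, g1 f') in the dual forces
   g3 = g1 f' (both are monic). Conversely, for such a factorization every (u, v) in the dual
   has v = g1 w and u + g1 g' w = g1 f' t, and (u, v) is the combination of the rows with
   coefficients f' t - g' w and r w - g' t. *)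

lemma euclidean_bezout:
  fixes a b :: "'a::euclidean_ring"
  shows "\<exists>d s t. d dvd a \<and> d dvd b \<and> d = s * a + t * b"
proof (induction b arbitrary: a rule: measure_induct_rule[where f = euclidean_size])
  case (less b)
  show ?case
  proof (cases "b = 0")
    case True
    then show ?thesis by (intro exI[of _ a] exI[of _ 1] exI[of _ 0]) simp
  next
    case False
    have "\<exists>d s t. d dvd b \<and> d dvd a mod b \<and> d = s * b + t * (a mod b)"
      by (rule less) (rule mod_size_less[OF False])
    then obtain d s t where d: "d dvd b" "d dvd a mod b" "d = s * b + t * (a mod b)" by blast
    have "d dvd a" using d(1,2) by (simp add: dvd_mod_iff)
    moreover have "d = t * a + (s - t * (a div b)) * b"
      unfolding d(3) minus_div_mult_eq_mod[symmetric] by (simp add: algebra_simps)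
    ultimately show ?thesis using d(1) by blast
  qed
qed

lemma power2_dvd_power2_imp_dvd:
  fixes a b :: "'a::euclidean_ring"
  assumes "a\<^sup>2 dvd b\<^sup>2"
  shows "a dvd b"
proof (cases "a = 0")
  case True
  then show ?thesis using assms by simp
next
  case False
  obtain d s t where d: "d dvd a" "d dvd b" "d = s * a + t * b"
    using euclidean_bezout by blast
  then obtain a' b' where a': "a = d * a'" and b': "b = d * b'" by blast
  have "d \<noteq> 0" using False a' by auto
  have "d * (s * a' + t * b') = d * 1" using d(3) unfolding a' b' by (simp add: algebra_simps)
  then have coprime: "1 = s * a' + t * b'" using \<open>d \<noteq> 0\<close> by simp
  have "d\<^sup>2 * a'\<^sup>2 dvd d\<^sup>2 * b'\<^sup>2" using assms unfolding a' b' by (simp add: power_mult_distrib)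
  then have "a' dvd b'\<^sup>2" using \<open>d \<noteq> 0\<close> by (simp add: dvd_mult_left power2_eq_square)
  moreover have "1 = a' * (s * s * a' + 2 * s * t * b') + t\<^sup>2 * b'\<^sup>2"
    using arg_cong[OF coprime, of power2] by (simp add: power2_eq_square algebra_simps)
  ultimately have "is_unit a'" by (metis dvd_add dvd_mult dvd_triv_left)
  then show ?thesis unfolding a' b' by (simp add: unit_imp_dvd)
qed

lemma monic_dvd_eq_of_degree_le:
  fixes p q :: "'a::idom poly"
  assumes "lead_coeff p = 1" "lead_coeff q = 1" "p dvd q" "degree q \<le> degree p"
  shows "p = q"
proof -
  obtain k where k: "q = p * k" using assms(3) by (rule dvdE)
  have "k \<noteq> 0" "p \<noteq> 0" using assms(2) k by auto
  then have "degree k = 0" using k assms(4) by (simp add: degree_mult_eq)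
  moreover have "lead_coeff k = 1" using assms(1,2) k by (simp add: lead_coeff_mult)
  ultimately have "k = 1" using degree_0_id[of k] by (simp add: one_pCons)
  then show ?thesis using k by simp
qed

lemma dvd_mult_mod_iff:
  fixes m x y a b :: "'a::euclidean_semiring_cancel"
  shows "m dvd x * (a mod m) \<longleftrightarrow> m dvd x * a"
    and "m dvd a mod m * x \<longleftrightarrow> m dvd a * x"
    and "m dvd x * (a mod m) + y * (b mod m) \<longleftrightarrow> m dvd x * a + y * b"
    and "m dvd a mod m * x + b mod m * y \<longleftrightarrow> m dvd a * x + b * y"
  unfolding dvd_eq_mod_eq_0
  by (simp_all only: mod_mult_right_eq mod_mult_left_eq
      mod_add_cong[OF mod_mult_right_eq mod_mult_right_eq]
      mod_add_cong[OF mod_mult_left_eq mod_mult_left_eq])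

lemma mem_code2_iff:
  "(u, v) \<in> code2 f g1 g2 g3 \<longleftrightarrow> (\<exists>a b. u = a * g1 mod f \<and> v = (a * g2 + b * g3) mod f)"
proof
  assume "\<exists>a b. u = a * g1 mod f \<and> v = (a * g2 + b * g3) mod f"
  then obtain a b where "u = a * g1 mod f" "v = (a * g2 + b * g3) mod f" by blast
  then have "u = (a mod f) * g1 mod f" "v = ((a mod f) * g2 + (b mod f) * g3) mod f"
    by (simp_all add: mod_mult_left_eq mod_add_cong[OF mod_mult_left_eq mod_mult_left_eq])
  then show "(u, v) \<in> code2 f g1 g2 g3" unfolding code2_def A_elem_def by fastforce
qed (auto simp: code2_def)

lemma code2_generators:
  "(g1 mod f, g2 mod f) \<in> code2 f g1 g2 g3" "(0, g3 mod f) \<in> code2 f g1 g2 g3"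
  unfolding mem_code2_iff
  by (intro exI[of _ 1] exI[of _ 0]; simp) (intro exI[of _ 0] exI[of _ 1]; simp)

lemma mem_dual2_code2_iff:
  "(u, v) \<in> dual2 f (code2 f g1 g2 g3) \<longleftrightarrow>
     A_elem f u \<and> A_elem f v \<and> f dvd u * g1 + v * g2 \<and> f dvd v * g3"
proof
  assume dual: "(u, v) \<in> dual2 f (code2 f g1 g2 g3)"
  then have "f dvd u * (g1 mod f) + v * (g2 mod f)" "f dvd v * (g3 mod f)"
    using code2_generators unfolding dual2_def dvd_eq_mod_eq_0 by fastforce+
  then show "A_elem f u \<and> A_elem f v \<and> f dvd u * g1 + v * g2 \<and> f dvd v * g3"
    using dual unfolding dual2_def dvd_mult_mod_iff by simp
next
  assume dual: "A_elem f u \<and> A_elem f v \<and> f dvd u * g1 + v * g2 \<and> f dvd v * g3"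
  have "(u * c1 + v * c2) mod f = 0" if mem: "(c1, c2) \<in> code2 f g1 g2 g3" for c1 c2
  proof -
    obtain a b where c: "c1 = a * g1 mod f" "c2 = (a * g2 + b * g3) mod f"
      using mem unfolding mem_code2_iff by blast
    have "f dvd a * (u * g1 + v * g2) + b * (v * g3)" using dual by simp
    then have "f dvd u * (a * g1) + v * (a * g2 + b * g3)" by (simp add: algebra_simps)
    then have "f dvd u * (a * g1 mod f) + v * ((a * g2 + b * g3) mod f)"
      unfolding dvd_mult_mod_iff .
    then show ?thesis unfolding c by (simp only: dvd_eq_mod_eq_0)
  qed
  then show "(u, v) \<in> dual2 f (code2 f g1 g2 g3)" using dual unfolding dual2_def by auto
qed

lemma code2_subset_dual2_iff:
  "code2 f g1 g2 g3 \<subseteq> dual2 f (code2 f g1 g2 g3) \<longleftrightarrow>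
     f dvd g1\<^sup>2 + g2\<^sup>2 \<and> f dvd g2 * g3 \<and> f dvd g3\<^sup>2"
proof
  assume "code2 f g1 g2 g3 \<subseteq> dual2 f (code2 f g1 g2 g3)"
  then have "(g1 mod f, g2 mod f) \<in> dual2 f (code2 f g1 g2 g3)"
    "(0, g3 mod f) \<in> dual2 f (code2 f g1 g2 g3)"
    using code2_generators by blast+
  then have "f dvd g1 * g1 + g2 * g2" "f dvd g3 * g2" "f dvd g3 * g3"
    by (simp_all add: mem_dual2_code2_iff dvd_mult_mod_iff)
  then show "f dvd g1\<^sup>2 + g2\<^sup>2 \<and> f dvd g2 * g3 \<and> f dvd g3\<^sup>2"
    by (simp add: power2_eq_square mult.commute)
next
  assume orth: "f dvd g1\<^sup>2 + g2\<^sup>2 \<and> f dvd g2 * g3 \<and> f dvd g3\<^sup>2"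
  show "code2 f g1 g2 g3 \<subseteq> dual2 f (code2 f g1 g2 g3)"
  proof clarify
    fix u v
    assume "(u, v) \<in> code2 f g1 g2 g3"
    then obtain a b where u: "u = a * g1 mod f" and v: "v = (a * g2 + b * g3) mod f"
      unfolding mem_code2_iff by blast
    have "f dvd a * (g1\<^sup>2 + g2\<^sup>2) + b * (g2 * g3)" "f dvd a * (g2 * g3) + b * g3\<^sup>2"
      using orth by simp_all
    then have "f dvd (a * g1) * g1 + (a * g2 + b * g3) * g2" "f dvd (a * g2 + b * g3) * g3"
      by (simp_all add: power2_eq_square algebra_simps)
    then show "(u, v) \<in> dual2 f (code2 f g1 g2 g3)"
      unfolding mem_dual2_code2_iff u v A_elem_def dvd_mult_mod_iff by simp
  qed
qed

lemma code2_fst_dvd: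
  assumes "g1 dvd f" "(u, v) \<in> code2 f g1 g2 g3"
  shows "g1 dvd u"
proof -
  obtain a where "u = a * g1 mod f" using assms(2) unfolding mem_code2_iff by blast
  then show ?thesis using assms(1) by (simp add: dvd_mod_iff)
qed

lemma code2_snd_dvd_of_fst_eq_0:
  fixes f g1 g2 g3 :: "'a::field poly"
  assumes "g1 dvd f" "g1 \<noteq> 0" "g3 dvd f" "g3 dvd (f div g1) * g2"
    and "(0, v) \<in> code2 f g1 g2 g3"
  shows "g3 dvd v"
proof -
  obtain a b where "0 = a * g1 mod f" and v: "v = (a * g2 + b * g3) mod f"
    using assms(5) unfolding mem_code2_iff by blast
  then have "f dvd a * g1" by (simp add: dvd_eq_mod_eq_0)
  then obtain s where "a * g1 = f * s" by (rule dvdE)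
  then have "g1 * a = g1 * ((f div g1) * s)"
    using assms(1) by (metis dvd_div_mult_self mult.assoc mult.commute)
  then have "a = (f div g1) * s" using assms(2) by simp
  then have "g3 dvd a * g2 + b * g3" using assms(4) by (simp add: mult.assoc mult.left_commute)
  then show ?thesis unfolding v using assms(3) by (simp add: dvd_mod_iff)
qed

lemma power2_dvd_of_dual2_subset_code2:
  assumes "g1 dvd f" and dual: "dual2 f (code2 f g1 g2 g3) \<subseteq> code2 f g1 g2 g3"
  shows "g1\<^sup>2 dvd f"
proof -
  have "((f div g1) mod f, 0) \<in> dual2 f (code2 f g1 g2 g3)"
    using assms(1) by (simp add: mem_dual2_code2_iff A_elem_def dvd_mult_mod_iff)
  then have "g1 dvd (f div g1) mod f" using code2_fst_dvd[OF assms(1)] dual by blast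
  then have "g1 dvd f div g1" using assms(1) by (simp add: dvd_mod_iff)
  then have "g1 * g1 dvd g1 * (f div g1)" by (rule mult_dvd_mono[OF dvd_refl])
  then show ?thesis using dvd_mult_div_cancel[OF assms(1)] by (simp only: power2_eq_square)
qed

lemma dvd_of_dual2_subset_code2:
  fixes f g1 g2 g3 :: "'a::field poly"
  assumes "g1 dvd f" "g1 \<noteq> 0" "g3 dvd f" "g3 dvd (f div g1) * g2"
    and dual: "dual2 f (code2 f g1 g2 g3) \<subseteq> code2 f g1 g2 g3"
    and "f dvd v * g2" "f dvd v * g3"
  shows "g3 dvd v"
proof -
  have "(0, v mod f) \<in> dual2 f (code2 f g1 g2 g3)"
    using assms(6,7) by (simp add: mem_dual2_code2_iff A_elem_def dvd_mult_mod_iff)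
  then have "g3 dvd v mod f" using code2_snd_dvd_of_fst_eq_0[OF assms(1-4)] dual by blast
  then show ?thesis using assms(3) by (simp add: dvd_mod_iff)
qed

lemma self_orthogonal_factorization:
  fixes f g1 g2 g3 :: "'a::euclidean_ring"
  assumes "g1 \<noteq> 0" "f dvd g3\<^sup>2" "f dvd g2 * g3" "f dvd g1\<^sup>2 + g2\<^sup>2" "g1\<^sup>2 dvd f"
  obtains f' g' r where "f = g1\<^sup>2 * f'" "g2 = g1 * g'" "g'\<^sup>2 = r * f' - 1" "g1 * f' dvd g3"
proof -
  obtain f' where f': "f = g1\<^sup>2 * f'" using assms(5) by (rule dvdE)
  have "g1\<^sup>2 dvd g2\<^sup>2"
    using dvd_trans[OF assms(5,4)] by (simp add: dvd_add_right_iff)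
  then obtain g' where g': "g2 = g1 * g'" using power2_dvd_power2_imp_dvd by blast
  have "g1\<^sup>2 * f' dvd g1\<^sup>2 * (1 + g'\<^sup>2)"
    using assms(4) unfolding f' g' by (simp add: algebra_simps power_mult_distrib)
  then obtain r where r: "1 + g'\<^sup>2 = f' * r" using assms(1) by (auto elim: dvdE)
  have "g1 * (g1 * f') dvd g1 * (g' * g3)"
    using assms(3) unfolding f' g' by (simp add: algebra_simps power2_eq_square)
  then have "g1 * f' dvd g' * g3" using assms(1) by simp
  then have "g1 * f' dvd g'\<^sup>2 * g3" by (simp add: power2_eq_square mult.assoc)
  moreover have "g1 dvd g3"
    using dvd_trans[OF assms(5,2)] by (rule power2_dvd_power2_imp_dvd)
  then have "g1 * f' dvd r * f' * g3" by (simp add: mult_dvd_mono mult.commute)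
  moreover have "g3 = r * f' * g3 - g'\<^sup>2 * g3"
    unfolding mult.commute[of r] r[symmetric] by (simp add: algebra_simps)
  ultimately have "g1 * f' dvd g3" by (metis dvd_diff)
  moreover have "g'\<^sup>2 = r * f' - 1" using r by (simp add: algebra_simps)
  ultimately show ?thesis using that f' g' by blast
qed

lemma factorization_imp_self_dual_conditions:
  fixes f g1 g2 g3 :: "'a::idom poly"
  assumes "f \<noteq> 0"
    and "\<exists>g' f' r. g'\<^sup>2 = r * f' - 1 \<and> f = g1\<^sup>2 * f' \<and> g3 = g1 * f' \<and> g2 = g1 * g'"
  shows "degree g1 + degree g3 = degree f \<and> f dvd g3\<^sup>2 \<and> f dvd g2 * g3 \<and>
    f dvd g1\<^sup>2 + g2\<^sup>2 \<and> g1\<^sup>2 dvd f"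
proof -
  obtain g' f' r where r: "g'\<^sup>2 = r * f' - 1" and f: "f = g1\<^sup>2 * f'"
    and g3: "g3 = g1 * f'" and g2: "g2 = g1 * g'"
    using assms(2) by blast
  have "g1 \<noteq> 0" "f' \<noteq> 0" using assms(1) f by auto
  then have "degree g1 + degree g3 = degree f"
    unfolding f g3 by (simp add: degree_mult_eq degree_power_eq)
  moreover have "g3\<^sup>2 = f * f'" "g2 * g3 = f * g'"
    unfolding f g2 g3 by (simp_all add: power2_eq_square algebra_simps)
  moreover have "g1\<^sup>2 + g2\<^sup>2 = f * r"
  proof -
    have "g1\<^sup>2 + g2\<^sup>2 = g1\<^sup>2 * (1 + g'\<^sup>2)"
      unfolding g2 by (simp add: power2_eq_square algebra_simps)
    also have "1 + g'\<^sup>2 = r * f'" using r by (simp add: algebra_simps)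
    finally show ?thesis unfolding f by (simp add: algebra_simps)
  qed
  ultimately show ?thesis using f by simp
qed

lemma self_dual_conditions_imp_factorization:
  fixes f g1 g2 g3 :: "'a::field poly"
  assumes "lead_coeff f = 1" "lead_coeff g1 = 1" "lead_coeff g3 = 1"
    and conditions: "degree g1 + degree g3 = degree f \<and> f dvd g3\<^sup>2 \<and> f dvd g2 * g3 \<and>
      f dvd g1\<^sup>2 + g2\<^sup>2 \<and> g1\<^sup>2 dvd f"
  shows "\<exists>g' f' r. g'\<^sup>2 = r * f' - 1 \<and> f = g1\<^sup>2 * f' \<and> g3 = g1 * f' \<and> g2 = g1 * g'"
proof -
  have "g1 \<noteq> 0" using assms(2) by auto
  then obtain f' g' r where fac: "f = g1\<^sup>2 * f'" "g2 = g1 * g'" "g'\<^sup>2 = r * f' - 1"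
    and "g1 * f' dvd g3"
    using self_orthogonal_factorization conditions by metis
  have "f' \<noteq> 0" using assms(1) fac(1) by auto
  have "lead_coeff (g1 * f') = 1"
    using assms(1,2) unfolding fac(1) by (simp add: lead_coeff_mult lead_coeff_power)
  moreover have "degree g3 \<le> degree (g1 * f')"
    using conditions \<open>g1 \<noteq> 0\<close> \<open>f' \<noteq> 0\<close> unfolding fac(1)
    by (simp add: degree_mult_eq degree_power_eq)
  ultimately have "g1 * f' = g3"
    using monic_dvd_eq_of_degree_le assms(3) \<open>g1 * f' dvd g3\<close> by blast
  then show ?thesis using fac by blast
qed

lemma dual2_subset_code2_of_factorization:
  fixes f g1 g2 g3 g' f' r :: "'a::field poly"
  assumes "f \<noteq> 0" "g'\<^sup>2 = r * f' - 1" "f = g1\<^sup>2 * f'" "g3 = g1 * f'" "g2 = g1 * g'"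
  shows "dual2 f (code2 f g1 g2 g3) \<subseteq> code2 f g1 g2 g3"
proof clarify
  fix u v
  assume "(u, v) \<in> dual2 f (code2 f g1 g2 g3)"
  then have u: "u mod f = u" and v: "v mod f = v"
    and orth: "f dvd u * g1 + v * g2" "f dvd v * g3"
    unfolding mem_dual2_code2_iff A_elem_def by auto
  have "g1 \<noteq> 0" "f' \<noteq> 0" using assms(1,3) by auto
  have "(g1 * f') * g1 dvd (g1 * f') * v"
    using orth(2) unfolding assms(3,4) by (simp add: power2_eq_square algebra_simps)
  then obtain w where w: "v = g1 * w" using \<open>g1 \<noteq> 0\<close> \<open>f' \<noteq> 0\<close> by (auto elim: dvdE)
  have "g1 * (g1 * f') dvd g1 * (u + g1 * g' * w)"
    using orth(1) unfolding assms(3,5) w by (simp add: power2_eq_square algebra_simps)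
  then obtain t where t: "u + g1 * g' * w = g1 * f' * t" using \<open>g1 \<noteq> 0\<close> by (auto elim: dvdE)
  define a where "a = f' * t - g' * w"
  define b where "b = r * w - g' * t"
  have "u = a * g1" unfolding a_def using t by (simp add: algebra_simps)
  moreover have "a * g2 + b * g3 = g1 * w * (r * f' - g'\<^sup>2)"
    unfolding a_def b_def assms(4,5) by (simp add: power2_eq_square algebra_simps)
  then have "v = a * g2 + b * g3" using assms(2) w by simp
  ultimately show "(u, v) \<in> code2 f g1 g2 g3"
    unfolding mem_code2_iff using u v by metis
qed

lemma factorization_imp_self_dual:
  fixes f g1 g2 g3 :: "'a::field poly"
  assumes "f \<noteq> 0"
    and factorization:
      "\<exists>g' f' r. g'\<^sup>2 = r * f' - 1 \<and> f = g1\<^sup>2 * f' \<and> g3 = g1 * f' \<and> g2 = g1 * g'"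
  shows "code2 f g1 g2 g3 = dual2 f (code2 f g1 g2 g3)"
proof
  show "code2 f g1 g2 g3 \<subseteq> dual2 f (code2 f g1 g2 g3)"
    using code2_subset_dual2_iff factorization_imp_self_dual_conditions[OF assms] by blast
  show "dual2 f (code2 f g1 g2 g3) \<subseteq> code2 f g1 g2 g3"
    using factorization dual2_subset_code2_of_factorization[OF \<open>f \<noteq> 0\<close>] by blast
qed

lemma self_dual_code2_imp_factorization:
  fixes f g1 g2 g3 :: "'a::field poly"
  assumes "lead_coeff f = 1" "is_CGM2 f g1 g2 g3"
    and self_dual: "code2 f g1 g2 g3 = dual2 f (code2 f g1 g2 g3)"
  shows "\<exists>g' f' r. g'\<^sup>2 = r * f' - 1 \<and> f = g1\<^sup>2 * f' \<and> g3 = g1 * f' \<and> g2 = g1 * g'"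
proof -
  have g1: "lead_coeff g1 = 1" "g1 dvd f"
    and g3: "lead_coeff g3 = 1" "g3 dvd f" "g3 dvd (f div g1) * g2"
    using assms(2) unfolding is_CGM2_def by auto
  have "g1 \<noteq> 0" using g1(1) by auto
  have "f dvd g1\<^sup>2 + g2\<^sup>2" "f dvd g2 * g3" "f dvd g3\<^sup>2"
    using code2_subset_dual2_iff self_dual by blast+
  moreover have "g1\<^sup>2 dvd f"
    using power2_dvd_of_dual2_subset_code2[OF g1(2)] self_dual by blast
  ultimately obtain f' g' r where fac: "f = g1\<^sup>2 * f'" "g2 = g1 * g'" "g'\<^sup>2 = r * f' - 1"
    and "g1 * f' dvd g3"
    using self_orthogonal_factorization \<open>g1 \<noteq> 0\<close> by metis
  then obtain k where k: "g3 = g1 * f' * k" by (auto elim: dvdE)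
  have "f' \<noteq> 0" using assms(1) fac(1) by auto
  have "f dvd (g1 * f') * g2" "f dvd (g1 * f') * g3"
    unfolding fac(1,2) k by (simp_all add: power2_eq_square algebra_simps)
  then have "g3 dvd g1 * f'"
    using dvd_of_dual2_subset_code2 g1(2) \<open>g1 \<noteq> 0\<close> g3(2,3) self_dual by blast
  then have "degree g3 \<le> degree (g1 * f')"
    using \<open>g1 \<noteq> 0\<close> \<open>f' \<noteq> 0\<close> by (simp add: dvd_imp_degree_le)
  moreover have "lead_coeff (g1 * f') = 1"
    using assms(1) g1(1) unfolding fac(1) by (simp add: lead_coeff_mult lead_coeff_power)
  ultimately have "g1 * f' = g3"
    using monic_dvd_eq_of_degree_le g3(1) \<open>g1 * f' dvd g3\<close> by blast
  then show ?thesis using fac by blast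
qed

theorem mainTheorem7:
  fixes f g1 g2 g3 :: "'a::{finite, field} poly"
    and C :: "('a poly \<times> 'a poly) set"
  assumes "lead_coeff f = 1"
    and "is_CGM2 f g1 g2 g3"
    and "C = code2 f g1 g2 g3"
  shows "(C = dual2 f C \<longleftrightarrow>
            (degree g1 + degree g3 = degree f \<and> f dvd g3 ^ 2 \<and> f dvd g2 * g3 \<and>
             f dvd g1 ^ 2 + g2 ^ 2 \<and> g1 ^ 2 dvd f))
       \<and> ((degree g1 + degree g3 = degree f \<and> f dvd g3 ^ 2 \<and> f dvd g2 * g3 \<and>
             f dvd g1 ^ 2 + g2 ^ 2 \<and> g1 ^ 2 dvd f) \<longleftrightarrow>
          (\<exists>g' f' r. g' ^ 2 = r * f' - 1 \<and> f = g1 ^ 2 * f' \<and> g3 = g1 * f' \<and> g2 = g1 * g'))"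
proof -
  have "f \<noteq> 0" using assms(1) by auto
  have monic: "lead_coeff g1 = 1" "lead_coeff g3 = 1"
    using assms(2) unfolding is_CGM2_def by auto
  show ?thesis
    unfolding assms(3)
    using self_dual_code2_imp_factorization[OF assms(1,2)]
      self_dual_conditions_imp_factorization[OF assms(1) monic, of g2]
      factorization_imp_self_dual_conditions[OF \<open>f \<noteq> 0\<close>, of g1 g3 g2]
      factorization_imp_self_dual[OF \<open>f \<noteq> 0\<close>, of g1 g3 g2]
    by blast
qed

end
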